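(* Consider a generalized Nash equilibrium problem (GNEP) with $N$ players in which player $\nu$ solves $\min_{x^\nu}\theta_\nu(x)$ subject to $c^\nu(x)\le 0$, where $\theta_\nu:\mathbb{R}^n\to\mathbb{R}$ and $c^\nu:\mathbb{R}^n\to\mathbb{R}^{r_\nu}$ are continuously differentiable. Let $(x^k)\subset\mathbb{R}^n$ be a sequence converging to $\bar x$ and, for each $\nu$, let $(\lambda^{\nu,k})\subset\mathbb{R}^{r_\nu}$ be vectors with $$\nabla_{x^\nu}\theta_\nu(x^k)+\nabla_{x^\nu}c^\nu(x^k)\lambda^{\nu,k}\to 0\quad\text{and}\quad \min\{-c^\nu(x^k),\lambda^{\nu,k}\}\to0$$ for every $\nu$. If GNEP-CPLD holds in $\bar x$, then there is a multiplier $\bar\lambda$ such that $(\bar x,\bar\lambda)$ is a KKT point of the GNEP.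
   Context: Variables: $x=(x^1,\ldots,x^N)\in\mathbb{R}^n$, $x^\nu\in\mathbb{R}^{n_\nu}$, $r=r_1+\cdots+r_N$; $\nabla f$ is the transposed Jacobian and $\nabla_{x^\nu}f$ its submatrix for the components $x^\nu$; $\min$ of vectors is componentwise. A pair $(x,\lambda)\in\mathbb{R}^{n+r}$, $\lambda=(\lambda^1,\ldots,\lambda^N)$, $\lambda^\nu\in\mathbb{R}^{r_\nu}$, is a KKT point of the GNEP if for every $\nu$: $\nabla_{x^\nu}\theta_\nu(x)+\nabla_{x^\nu}c^\nu(x)\lambda^\nu=0$ and $\min\{-c^\nu(x),\lambda^\nu\}=0$. Vectors $v_1,\dots,v_k$ are positively linearly dependent if $\sum_i\lambda_iv_i=0$ has a nontrivial solution with all $\lambda_i\ge0$. CPLD$_\nu$ at a point $x$ with $c^\nu(x)\le0$: whenever $\nabla_{x^\nu}c_i^\nu(x)$, $i\in I$, are positively linearly dependent for some $I\subset\{i:c_i^\nu(x)=0\}$, the partial gradients $\nabla_{x^\nu}c_i^\nu(y)$, $i\in I$, are linearly dependent for all $y$ in a neighbourhood of $x$. GNEP-CPLD holds at $x$ if $c^\nu(x)\le 0$ and CPLD$_\nu$ holds at $x$ for every $\nu$. *)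

theory Defs
  imports "HOL-Analysis.Analysis"
begin

text \<open>Setting: R^n is real^'n; the coordinates are partitioned into player blocks by
  blk :: 'n => 'p (coordinate j belongs to x^nu iff blk j = nu). Player nu has r nu
  constraints c nu i, i < r nu. Partial gradients w.r.t. x^nu are represented as vectors
  in real^'n that vanish outside the block of nu.\<close>

definition partial :: "'n::finite \<Rightarrow> (real^'n \<Rightarrow> real) \<Rightarrow> real^'n \<Rightarrow> real" where
  "partial j f x = frechet_derivative f (at x) (axis j 1)"

definition grad :: "(real^'n::finite \<Rightarrow> real) \<Rightarrow> real^'n \<Rightarrow> real^'n" where
  "grad f x = (\<chi> j. partial j f x)"

definition C1 :: "(real^'n::finite \<Rightarrow> real) \<Rightarrow> bool" where
  "C1 f \<longleftrightarrow> (\<forall>x. f differentiable (at x)) \<and> continuous_on UNIV (grad f)"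

definition pgrad :: "('n::finite \<Rightarrow> 'p) \<Rightarrow> 'p \<Rightarrow> (real^'n \<Rightarrow> real) \<Rightarrow> real^'n \<Rightarrow> real^'n" where
  "pgrad blk \<nu> f x = (\<chi> j. if blk j = \<nu> then partial j f x else 0)"

definition pos_lin_dep :: "nat set \<Rightarrow> (nat \<Rightarrow> real^'n::finite) \<Rightarrow> bool" where
  "pos_lin_dep I v \<longleftrightarrow> (\<exists>\<mu>. (\<forall>i\<in>I. \<mu> i \<ge> 0) \<and> (\<exists>i\<in>I. \<mu> i \<noteq> 0) \<and> (\<Sum>i\<in>I. \<mu> i *\<^sub>R v i) = 0)"

definition lin_dep_fam :: "nat set \<Rightarrow> (nat \<Rightarrow> real^'n::finite) \<Rightarrow> bool" where
  "lin_dep_fam I v \<longleftrightarrow> (\<exists>\<mu>. (\<exists>i\<in>I. \<mu> i \<noteq> 0) \<and> (\<Sum>i\<in>I. \<mu> i *\<^sub>R v i) = 0)"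

definition CPLD_player ::
  "('n::finite \<Rightarrow> 'p) \<Rightarrow> ('p \<Rightarrow> nat) \<Rightarrow> ('p \<Rightarrow> nat \<Rightarrow> real^'n \<Rightarrow> real) \<Rightarrow> 'p \<Rightarrow> real^'n \<Rightarrow> bool" where
  "CPLD_player blk r c \<nu> x \<longleftrightarrow>
     (\<forall>I. I \<subseteq> {i. i < r \<nu> \<and> c \<nu> i x = 0} \<longrightarrow>
        pos_lin_dep I (\<lambda>i. pgrad blk \<nu> (c \<nu> i) x) \<longrightarrow>
        (\<exists>U. open U \<and> x \<in> U \<and> (\<forall>y\<in>U. lin_dep_fam I (\<lambda>i. pgrad blk \<nu> (c \<nu> i) y))))"

definition GNEP_CPLD ::
  "('n::finite \<Rightarrow> 'p::finite) \<Rightarrow> ('p \<Rightarrow> nat) \<Rightarrow> ('p \<Rightarrow> nat \<Rightarrow> real^'n \<Rightarrow> real) \<Rightarrow> real^'n \<Rightarrow> bool" where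
  "GNEP_CPLD blk r c x \<longleftrightarrow>
     (\<forall>\<nu>. (\<forall>i<r \<nu>. c \<nu> i x \<le> 0) \<and> CPLD_player blk r c \<nu> x)"

definition is_KKT ::
  "('n::finite \<Rightarrow> 'p::finite) \<Rightarrow> ('p \<Rightarrow> real^'n \<Rightarrow> real) \<Rightarrow> ('p \<Rightarrow> nat) \<Rightarrow>
   ('p \<Rightarrow> nat \<Rightarrow> real^'n \<Rightarrow> real) \<Rightarrow> real^'n \<Rightarrow> ('p \<Rightarrow> nat \<Rightarrow> real) \<Rightarrow> bool" where
  "is_KKT blk \<theta> r c x lm \<longleftrightarrow>
     (\<forall>\<nu>. pgrad blk \<nu> (\<theta> \<nu>) x + (\<Sum>i<r \<nu>. lm \<nu> i *\<^sub>R pgrad blk \<nu> (c \<nu> i) x) = 0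
         \<and> (\<forall>i<r \<nu>. min (- c \<nu> i x) (lm \<nu> i) = 0))"

end

theory Submission
  imports Defs
begin

(* Each player is treated separately; the other players' variables only enter through x.
  Along the sequence, the multipliers of inactive constraints and the negative parts of the
  multipliers of active ones tend to zero, so the residual stays small with nonnegative
  multipliers on the active set at xbar. By conic Caratheodory these can be moved onto
  linearly independent gradients, and along a subsequence this support J is constant.
  Normalising (1, beta_k) to the unit simplex and passing to the limit yields Fritz John
  multipliers (L0, L) at xbar. If L0 > 0, then L / L0 is a KKT multiplier. If L0 = 0, the
  gradients indexed by J are positively linearly dependent at xbar, so by CPLD they are
  linearly dependent near xbar, contradicting their independence along the subsequence. *)

lemma nonneg_combination_independent_support:
  fixes w :: "nat \<Rightarrow> real^'n::finite"
  assumes "finite S" "\<forall>i\<in>S. a i \<ge> 0"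
  shows "\<exists>J \<beta>. J \<subseteq> S \<and> (\<forall>i\<in>J. \<beta> i \<ge> 0) \<and> (\<Sum>i\<in>S. a i *\<^sub>R w i) = (\<Sum>i\<in>J. \<beta> i *\<^sub>R w i)
     \<and> \<not> lin_dep_fam J w"
  using assms
proof (induction S arbitrary: a rule: finite_psubset_induct)
  case (psubset S)
  show ?case
  proof (cases "lin_dep_fam S w")
    case False
    then show ?thesis using psubset.prems by blast
  next
    case True
    then obtain \<nu> where nz: "\<exists>i\<in>S. \<nu> i \<noteq> 0" and s0: "(\<Sum>i\<in>S. \<nu> i *\<^sub>R w i) = 0"
      unfolding lin_dep_fam_def by blast
    define \<nu>' where "\<nu>' = (if \<exists>i\<in>S. \<nu> i > 0 then \<nu> else (\<lambda>i. - \<nu> i))"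
    have pos: "\<exists>i\<in>S. \<nu>' i > 0"
      using nz by (force simp: \<nu>'_def)
    have s0': "(\<Sum>i\<in>S. \<nu>' i *\<^sub>R w i) = 0"
      using s0 by (simp add: \<nu>'_def sum_negf)
    define P where "P = {i\<in>S. \<nu>' i > 0}"
    have finP: "finite P" "P \<noteq> {}" using psubset.hyps pos by (auto simp: P_def)
    \<comment> \<open>Subtract the largest multiple of \<nu>' that keeps all coefficients nonnegative;
      the coefficient at i1 then vanishes.\<close>
    define t where "t = Min ((\<lambda>i. a i / \<nu>' i) ` P)"
    have "t \<in> (\<lambda>i. a i / \<nu>' i) ` P"
      unfolding t_def using finP by (intro Min_in) auto
    then obtain i1 where i1: "i1 \<in> P" "t = a i1 / \<nu>' i1" by blast
    have tle: "\<And>i. i \<in> P \<Longrightarrow> t \<le> a i / \<nu>' i" unfolding t_def using finP by auto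
    have t0: "t \<ge> 0" using i1 psubset.prems by (auto simp: P_def)
    define a' where "a' i = a i - t * \<nu>' i" for i
    have a'0: "\<forall>i\<in>S - {i1}. a' i \<ge> 0"
    proof
      fix i assume i: "i \<in> S - {i1}"
      show "a' i \<ge> 0"
      proof (cases "\<nu>' i > 0")
        case True
        then have "t \<le> a i / \<nu>' i" using tle i by (auto simp: P_def)
        then show ?thesis using True by (simp add: a'_def pos_le_divide_eq)
      next
        case False
        then have "t * \<nu>' i \<le> 0" using t0 by (simp add: mult_nonneg_nonpos)
        then show ?thesis using psubset.prems i by (force simp: a'_def)
      qed
    qed
    have i1S: "i1 \<in> S" using i1 by (auto simp: P_def)
    have "(\<Sum>i\<in>S. a i *\<^sub>R w i) = (\<Sum>i\<in>S. a' i *\<^sub>R w i)"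
      using s0' by (simp add: a'_def scaleR_diff_left sum_subtractf flip: scaleR_scaleR scaleR_sum_right)
    also have "\<dots> = (\<Sum>i\<in>S - {i1}. a' i *\<^sub>R w i)"
      using sum.remove[OF psubset.hyps(1) i1S, of "\<lambda>i. a' i *\<^sub>R w i"] i1 by (simp add: a'_def P_def)
    finally have eq: "(\<Sum>i\<in>S. a i *\<^sub>R w i) = (\<Sum>i\<in>S - {i1}. a' i *\<^sub>R w i)" .
    have "S - {i1} \<subset> S" using i1S by auto
    from psubset.IH[OF this a'0] eq show ?thesis by (metis Diff_subset subset_trans)
  qed
qed

lemma finite_range_imp_constant_subseq:
  assumes "finite (range f)"
  obtains \<sigma> :: "nat \<Rightarrow> nat" and a where "strict_mono \<sigma>" "\<And>n. f (\<sigma> n) = a"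
proof -
  obtain a where "infinite (f -` {a})"
    using inf_img_fin_domE[of f UNIV] assms by auto
  then obtain \<sigma> :: "nat \<Rightarrow> nat" where "strict_mono \<sigma>" "\<And>n. \<sigma> n \<in> f -` {a}"
    using infinite_enumerate by blast
  then show ?thesis using that by blast
qed

lemma finite_family_convergent_subseq:
  fixes f :: "nat \<Rightarrow> 'i \<Rightarrow> 'a::metric_space"
  assumes "finite I" "compact K" "\<And>n i. i \<in> I \<Longrightarrow> f n i \<in> K"
  obtains \<sigma> where "strict_mono \<sigma>" "\<And>i. i \<in> I \<Longrightarrow> \<exists>l\<in>K. (\<lambda>n. f (\<sigma> n) i) \<longlonglongrightarrow> l"
  using assms(1,3)
proof (induction I arbitrary: thesis rule: finite_induct)
  case empty
  then show ?case using strict_mono_id by blast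
next
  case (insert x F)
  obtain \<sigma> where \<sigma>: "strict_mono \<sigma>" "\<And>i. i \<in> F \<Longrightarrow> \<exists>l\<in>K. (\<lambda>n. f (\<sigma> n) i) \<longlonglongrightarrow> l"
    using insert.IH insert.prems(2) by blast
  obtain l \<rho> where l: "l \<in> K" "strict_mono \<rho>" "((\<lambda>n. f (\<sigma> n) x) \<circ> \<rho>) \<longlonglongrightarrow> l"
    using compact_imp_seq_compact[OF assms(2)] insert.prems(2)
    unfolding seq_compact_def by (metis insertI1)
  have "\<exists>l\<in>K. (\<lambda>n. f ((\<sigma> \<circ> \<rho>) n) i) \<longlonglongrightarrow> l" if "i \<in> insert x F" for i
    using that l \<sigma>(2) LIMSEQ_subseq_LIMSEQ[OF _ l(2)] by (fastforce simp: o_def)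
  then show ?case using insert.prems(1) strict_mono_o[OF \<sigma>(1) l(2)] by blast
qed

lemma nonneg_combinations_independent_subseq:
  fixes w :: "nat \<Rightarrow> nat \<Rightarrow> real^'n::finite"
  assumes "finite A" "\<And>k i. i \<in> A \<Longrightarrow> \<mu> k i \<ge> 0"
  obtains \<sigma> :: "nat \<Rightarrow> nat" and J \<beta>
  where "strict_mono \<sigma>" "J \<subseteq> A" "\<And>k i. i \<in> J \<Longrightarrow> \<beta> k i \<ge> 0"
    "\<And>k. (\<Sum>i\<in>A. \<mu> (\<sigma> k) i *\<^sub>R w (\<sigma> k) i) = (\<Sum>i\<in>J. \<beta> k i *\<^sub>R w (\<sigma> k) i)"
    "\<And>k. \<not> lin_dep_fam J (w (\<sigma> k))"
proof -
  have "\<forall>k. \<exists>J \<beta>. J \<subseteq> A \<and> (\<forall>i\<in>J. \<beta> i \<ge> 0)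
      \<and> (\<Sum>i\<in>A. \<mu> k i *\<^sub>R w k i) = (\<Sum>i\<in>J. \<beta> i *\<^sub>R w k i) \<and> \<not> lin_dep_fam J (w k)"
  proof
    fix k
    show "\<exists>J \<beta>. J \<subseteq> A \<and> (\<forall>i\<in>J. \<beta> i \<ge> 0)
      \<and> (\<Sum>i\<in>A. \<mu> k i *\<^sub>R w k i) = (\<Sum>i\<in>J. \<beta> i *\<^sub>R w k i) \<and> \<not> lin_dep_fam J (w k)"
      using assms by (intro nonneg_combination_independent_support) auto
  qed
  then obtain JJ \<beta>\<beta> where "\<forall>k. JJ k \<subseteq> A \<and> (\<forall>i\<in>JJ k. \<beta>\<beta> k i \<ge> 0)
      \<and> (\<Sum>i\<in>A. \<mu> k i *\<^sub>R w k i) = (\<Sum>i\<in>JJ k. \<beta>\<beta> k i *\<^sub>R w k i) \<and> \<not> lin_dep_fam (JJ k) (w k)"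
    by metis
  then have JJ: "\<And>k. JJ k \<subseteq> A" "\<And>k i. i \<in> JJ k \<Longrightarrow> \<beta>\<beta> k i \<ge> 0"
    "\<And>k. (\<Sum>i\<in>A. \<mu> k i *\<^sub>R w k i) = (\<Sum>i\<in>JJ k. \<beta>\<beta> k i *\<^sub>R w k i)"
    "\<And>k. \<not> lin_dep_fam (JJ k) (w k)"
    by auto
  have "finite (range JJ)"
    by (rule finite_subset[of _ "Pow A"]) (use JJ(1) assms(1) in auto)
  then obtain \<sigma> :: "nat \<Rightarrow> nat" and J where \<sigma>: "strict_mono \<sigma>" "\<And>k. JJ (\<sigma> k) = J"
    by (rule finite_range_imp_constant_subseq) blast
  have "J \<subseteq> A" "\<And>k i. i \<in> J \<Longrightarrow> \<beta>\<beta> (\<sigma> k) i \<ge> 0"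
    "\<And>k. (\<Sum>i\<in>A. \<mu> (\<sigma> k) i *\<^sub>R w (\<sigma> k) i) = (\<Sum>i\<in>J. \<beta>\<beta> (\<sigma> k) i *\<^sub>R w (\<sigma> k) i)"
    "\<And>k. \<not> lin_dep_fam J (w (\<sigma> k))"
    using JJ(1,3,4)[of "\<sigma> k" for k] JJ(2)[of _ "\<sigma> k" for k] unfolding \<sigma>(2) by auto
  with \<sigma>(1) show ?thesis
    by (rule that)
qed

lemma nonneg_combination_limit_simplex:
  fixes g :: "nat \<Rightarrow> 'a::real_normed_vector" and v :: "nat \<Rightarrow> 'i \<Rightarrow> 'a"
  assumes J: "finite J"
    and g: "g \<longlonglongrightarrow> g0" and v: "\<And>i. i \<in> J \<Longrightarrow> (\<lambda>k. v k i) \<longlonglongrightarrow> v0 i"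
    and \<beta>: "\<And>k i. i \<in> J \<Longrightarrow> \<beta> k i \<ge> 0"
    and lim: "(\<lambda>k. g k + (\<Sum>i\<in>J. \<beta> k i *\<^sub>R v k i)) \<longlonglongrightarrow> 0"
  obtains L0 L where "L0 \<ge> 0" "\<And>i. i \<in> J \<Longrightarrow> L i \<ge> 0" "L0 + (\<Sum>i\<in>J. L i) = 1"
    "L0 *\<^sub>R g0 + (\<Sum>i\<in>J. L i *\<^sub>R v0 i) = 0"
proof -
  define M where "M k = 1 + (\<Sum>i\<in>J. \<beta> k i)" for k
  have M1: "M k \<ge> 1" for k
    using \<beta> by (auto simp: M_def intro: sum_nonneg)
  define F where "F k i = \<beta> k i / M k" for k i
  have F01: "F k i \<in> {0..1}" if "i \<in> J" for k i
  proof -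
    have "\<beta> k i \<le> M k"
      using member_le_sum[of i J "\<beta> k"] \<beta> that J by (simp add: M_def)
    then show ?thesis using \<beta>[OF that] M1[of k] by (simp add: F_def)
  qed
  obtain \<sigma> where \<sigma>: "strict_mono \<sigma>" "\<And>i. i \<in> J \<Longrightarrow> \<exists>l\<in>{0..1}. (\<lambda>n. F (\<sigma> n) i) \<longlonglongrightarrow> l"
    using finite_family_convergent_subseq[OF J compact_Icc, of F] F01 by blast
  then obtain L where L: "\<And>i. i \<in> J \<Longrightarrow> L i \<in> {0..1} \<and> (\<lambda>n. F (\<sigma> n) i) \<longlonglongrightarrow> L i"
    by metis
  define L0 where "L0 = 1 - (\<Sum>i\<in>J. L i)"
  have F_sum: "1 / M k = 1 - (\<Sum>i\<in>J. F k i)" for k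
    using M1[of k] by (simp add: F_def M_def field_simps flip: sum_divide_distrib)
  have M_lim: "(\<lambda>n. 1 / M (\<sigma> n)) \<longlonglongrightarrow> L0"
    unfolding F_sum L0_def using L by (intro tendsto_intros) auto
  have "L0 \<ge> 0"
    using M1 by (intro tendsto_lowerbound[OF M_lim] always_eventually allI)
      (simp_all add: order_trans[OF zero_le_one])
  have scaled: "(1 / M k) *\<^sub>R (g k + (\<Sum>i\<in>J. \<beta> k i *\<^sub>R v k i))
      = (1 / M k) *\<^sub>R g k + (\<Sum>i\<in>J. F k i *\<^sub>R v k i)" for k
    by (simp add: F_def scaleR_add_right scaleR_sum_right)
  have "(\<lambda>n. (1 / M (\<sigma> n)) *\<^sub>R (g (\<sigma> n) + (\<Sum>i\<in>J. \<beta> (\<sigma> n) i *\<^sub>R v (\<sigma> n) i))) \<longlonglongrightarrow> L0 *\<^sub>R 0"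
    using M_lim LIMSEQ_subseq_LIMSEQ[OF lim \<sigma>(1)] by (intro tendsto_scaleR) (simp_all add: o_def)
  moreover have "(\<lambda>n. (1 / M (\<sigma> n)) *\<^sub>R (g (\<sigma> n) + (\<Sum>i\<in>J. \<beta> (\<sigma> n) i *\<^sub>R v (\<sigma> n) i)))
      \<longlonglongrightarrow> L0 *\<^sub>R g0 + (\<Sum>i\<in>J. L i *\<^sub>R v0 i)"
    unfolding scaled using M_lim L LIMSEQ_subseq_LIMSEQ[OF g \<sigma>(1)] LIMSEQ_subseq_LIMSEQ[OF v \<sigma>(1)]
    by (intro tendsto_add tendsto_scaleR tendsto_sum) (simp_all add: o_def)
  ultimately have "L0 *\<^sub>R g0 + (\<Sum>i\<in>J. L i *\<^sub>R v0 i) = 0"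
    using LIMSEQ_unique by fastforce
  then show ?thesis
    using that[of L0 L] \<open>L0 \<ge> 0\<close> L by (simp add: L0_def)
qed

lemma complementarity_multiplier_limit:
  fixes h l :: "nat \<Rightarrow> real"
  assumes h: "h \<longlonglongrightarrow> h0" and feasible: "h0 \<le> 0"
    and compl: "(\<lambda>k. min (- h k) (l k)) \<longlonglongrightarrow> 0"
  shows "(\<lambda>k. l k - (if h0 = 0 then max (l k) 0 else 0)) \<longlonglongrightarrow> 0"
proof (cases "h0 = 0")
  case True
  have lim: "(\<lambda>k. \<bar>min (- h k) (l k)\<bar> + \<bar>h k\<bar>) \<longlonglongrightarrow> 0"
    using tendsto_add_zero[OF tendsto_rabs_zero[OF compl] tendsto_rabs_zero[OF h[unfolded True]]] by simp
  have bound: "norm (l k - max (l k) 0) \<le> \<bar>min (- h k) (l k)\<bar> + \<bar>h k\<bar>" for k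
    by (simp add: min_def max_def abs_if)
  show ?thesis
    using Lim_null_comparison[OF always_eventually[OF allI[OF bound]] lim] True by simp
next
  case False
  with feasible have "h0 < 0" by simp
  \<comment> \<open>An inactive constraint eventually stays below h0/2, so the min selects the multiplier.\<close>
  have "\<forall>\<^sub>F k in sequentially. - h0 / 2 < - h k"
    using order_tendstoD(1)[OF tendsto_minus[OF h], of "- h0 / 2"] \<open>h0 < 0\<close> by simp
  moreover have "\<forall>\<^sub>F k in sequentially. min (- h k) (l k) < - h0 / 2"
    using order_tendstoD(2)[OF compl, of "- h0 / 2"] \<open>h0 < 0\<close> by simp
  ultimately have "\<forall>\<^sub>F k in sequentially. min (- h k) (l k) = l k - (if h0 = 0 then max (l k) 0 else 0)"
    by eventually_elim (auto simp: False min_def)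
  then show ?thesis
    using tendsto_cong compl by fastforce
qed

lemma AKKT_residual_active_nonneg:
  fixes g :: "nat \<Rightarrow> 'a::real_normed_vector" and v :: "nat \<Rightarrow> nat \<Rightarrow> 'a"
    and h lam :: "nat \<Rightarrow> nat \<Rightarrow> real"
  assumes v: "\<And>i. i < m \<Longrightarrow> (\<lambda>k. v k i) \<longlonglongrightarrow> v0 i"
    and h: "\<And>i. i < m \<Longrightarrow> (\<lambda>k. h k i) \<longlonglongrightarrow> h0 i"
    and feasible: "\<And>i. i < m \<Longrightarrow> h0 i \<le> 0"
    and stat: "(\<lambda>k. g k + (\<Sum>i<m. lam k i *\<^sub>R v k i)) \<longlonglongrightarrow> 0"
    and compl: "\<And>i. i < m \<Longrightarrow> (\<lambda>k. min (- h k i) (lam k i)) \<longlonglongrightarrow> 0"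
  shows "(\<lambda>k. g k + (\<Sum>i\<in>{i. i < m \<and> h0 i = 0}. max (lam k i) 0 *\<^sub>R v k i)) \<longlonglongrightarrow> 0"
proof -
  define \<mu> where "\<mu> k i = (if h0 i = 0 then max (lam k i) 0 else 0)" for k i
  have "(\<lambda>k. lam k i - \<mu> k i) \<longlonglongrightarrow> 0" if "i < m" for i
    unfolding \<mu>_def using complementarity_multiplier_limit[OF h feasible compl] that by blast
  then have "(\<lambda>k. \<Sum>i<m. (lam k i - \<mu> k i) *\<^sub>R v k i) \<longlonglongrightarrow> (\<Sum>i<m. 0 *\<^sub>R v0 i)"
    by (intro tendsto_sum tendsto_scaleR v) auto
  with stat have "(\<lambda>k. (g k + (\<Sum>i<m. lam k i *\<^sub>R v k i)) - (\<Sum>i<m. (lam k i - \<mu> k i) *\<^sub>R v k i))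
      \<longlonglongrightarrow> 0"
    using tendsto_diff by fastforce
  moreover have "(\<Sum>i<m. \<mu> k i *\<^sub>R v k i) = (\<Sum>i\<in>{i\<in>{..<m}. h0 i = 0}. max (lam k i) 0 *\<^sub>R v k i)" for k
    unfolding sum.inter_filter[OF finite_lessThan] by (rule sum.cong) (auto simp: \<mu>_def)
  ultimately show ?thesis
    by (simp add: scaleR_diff_left sum_subtractf)
qed

lemma fritz_john_normal_imp_KKT:
  fixes g :: "'a::real_vector" and v :: "nat \<Rightarrow> 'a" and h :: "nat \<Rightarrow> real"
  assumes "L0 > 0" and J: "J \<subseteq> {i. i < m \<and> h i = 0}" and L: "\<And>i. i \<in> J \<Longrightarrow> L i \<ge> 0"
    and FJ: "L0 *\<^sub>R g + (\<Sum>i\<in>J. L i *\<^sub>R v i) = 0"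
    and feasible: "\<And>i. i < m \<Longrightarrow> h i \<le> 0"
  shows "\<exists>l. g + (\<Sum>i<m. l i *\<^sub>R v i) = 0 \<and> (\<forall>i<m. min (- h i) (l i) = 0)"
proof -
  define l where "l i = (if i \<in> J then L i / L0 else 0)" for i
  have "(\<Sum>i<m. l i *\<^sub>R v i) = (\<Sum>i\<in>J. l i *\<^sub>R v i)"
    using J by (intro sum.mono_neutral_right) (auto simp: l_def)
  also have "\<dots> = (1 / L0) *\<^sub>R (\<Sum>i\<in>J. L i *\<^sub>R v i)"
    by (simp add: l_def scaleR_sum_right)
  also have "\<dots> = - g"
  proof -
    have "(\<Sum>i\<in>J. L i *\<^sub>R v i) = - (L0 *\<^sub>R g)"
      using FJ by (simp add: eq_neg_iff_add_eq_0 add.commute)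
    then show ?thesis using \<open>L0 > 0\<close> by simp
  qed
  finally have "g + (\<Sum>i<m. l i *\<^sub>R v i) = 0"
    by simp
  moreover have "min (- h i) (l i) = 0" if "i < m" for i
    using J L feasible[OF that] \<open>L0 > 0\<close> by (auto simp: l_def)
  ultimately show ?thesis
    by blast
qed

lemma AKKT_CPLD_imp_KKT:
  fixes g :: "'x::metric_space \<Rightarrow> real^'n::finite" and v :: "nat \<Rightarrow> 'x \<Rightarrow> real^'n"
    and h :: "nat \<Rightarrow> 'x \<Rightarrow> real" and lam :: "nat \<Rightarrow> nat \<Rightarrow> real"
  assumes xs: "xs \<longlonglongrightarrow> xbar"
    and cont_g: "isCont g xbar"
    and cont_v: "\<And>i. i < m \<Longrightarrow> isCont (v i) xbar"
    and cont_h: "\<And>i. i < m \<Longrightarrow> isCont (h i) xbar"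
    and feasible: "\<And>i. i < m \<Longrightarrow> h i xbar \<le> 0"
    and stat: "(\<lambda>k. g (xs k) + (\<Sum>i<m. lam k i *\<^sub>R v i (xs k))) \<longlonglongrightarrow> 0"
    and compl: "\<And>i. i < m \<Longrightarrow> (\<lambda>k. min (- h i (xs k)) (lam k i)) \<longlonglongrightarrow> 0"
    and cpld: "\<And>I. I \<subseteq> {i. i < m \<and> h i xbar = 0} \<Longrightarrow> pos_lin_dep I (\<lambda>i. v i xbar) \<Longrightarrow>
                 \<exists>U. open U \<and> xbar \<in> U \<and> (\<forall>y\<in>U. lin_dep_fam I (\<lambda>i. v i y))"
  shows "\<exists>l. g xbar + (\<Sum>i<m. l i *\<^sub>R v i xbar) = 0 \<and> (\<forall>i<m. min (- h i xbar) (l i) = 0)"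
proof -
  define A where "A = {i. i < m \<and> h i xbar = 0}"
  have "finite A"
    by (simp add: A_def)
  have "(\<lambda>k. v i (xs k)) \<longlonglongrightarrow> v i xbar" "(\<lambda>k. h i (xs k)) \<longlonglongrightarrow> h i xbar" if "i < m" for i
    using isCont_tendsto_compose[OF cont_v[OF that] xs] isCont_tendsto_compose[OF cont_h[OF that] xs]
    by auto
  then have res_A: "(\<lambda>k. g (xs k) + (\<Sum>i\<in>A. max (lam k i) 0 *\<^sub>R v i (xs k))) \<longlonglongrightarrow> 0"
    unfolding A_def by (rule AKKT_residual_active_nonneg) (use feasible stat compl in auto)
  obtain \<sigma> :: "nat \<Rightarrow> nat" and J \<beta> where \<sigma>: "strict_mono \<sigma>" and J: "J \<subseteq> A"
    and \<beta>: "\<And>k i. i \<in> J \<Longrightarrow> \<beta> k i \<ge> 0"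
    and comb: "\<And>k. (\<Sum>i\<in>A. max (lam (\<sigma> k) i) 0 *\<^sub>R v i (xs (\<sigma> k))) = (\<Sum>i\<in>J. \<beta> k i *\<^sub>R v i (xs (\<sigma> k)))"
    and indep: "\<And>k. \<not> lin_dep_fam J (\<lambda>i. v i (xs (\<sigma> k)))"
    by (rule nonneg_combinations_independent_subseq[OF \<open>finite A\<close>, of "\<lambda>k i. max (lam k i) 0"
          "\<lambda>k i. v i (xs k)", OF max.cobounded2]) blast
  have "(\<lambda>k. g (xs (\<sigma> k)) + (\<Sum>i\<in>A. max (lam (\<sigma> k) i) 0 *\<^sub>R v i (xs (\<sigma> k)))) \<longlonglongrightarrow> 0"
    using LIMSEQ_subseq_LIMSEQ[OF res_A \<sigma>] by (simp add: o_def)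
  then have res: "(\<lambda>k. g (xs (\<sigma> k)) + (\<Sum>i\<in>J. \<beta> k i *\<^sub>R v i (xs (\<sigma> k)))) \<longlonglongrightarrow> 0"
    by (simp only: comb)
  have xs\<sigma>: "(\<lambda>k. xs (\<sigma> k)) \<longlonglongrightarrow> xbar"
    using LIMSEQ_subseq_LIMSEQ[OF xs \<sigma>] by (simp add: o_def)
  have "finite J"
    using J \<open>finite A\<close> by (rule finite_subset)
  have J_active: "J \<subseteq> {i. i < m \<and> h i xbar = 0}"
    using J by (simp add: A_def)
  have "(\<lambda>k. v i (xs (\<sigma> k))) \<longlonglongrightarrow> v i xbar" if "i \<in> J" for i
    using isCont_tendsto_compose[OF cont_v xs\<sigma>] that J_active by auto
  then obtain L0 L where "L0 \<ge> 0" and L: "\<And>i. i \<in> J \<Longrightarrow> L i \<ge> 0" and "L0 + (\<Sum>i\<in>J. L i) = 1"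
    and FJ: "L0 *\<^sub>R g xbar + (\<Sum>i\<in>J. L i *\<^sub>R v i xbar) = 0"
    by (rule nonneg_combination_limit_simplex[OF \<open>finite J\<close> isCont_tendsto_compose[OF cont_g xs\<sigma>] _ \<beta> res])
      blast+
  show ?thesis
  proof (cases "L0 = 0")
    case True
    \<comment> \<open>Then L witnesses positive linear dependence at xbar, which CPLD propagates to the
      points xs (\<sigma> k) close to xbar, where the gradients are independent.\<close>
    with \<open>L0 + (\<Sum>i\<in>J. L i) = 1\<close> have "(\<Sum>i\<in>J. L i) \<noteq> 0"
      by simp
    then obtain i where "i \<in> J" "L i \<noteq> 0"
      by (meson sum.neutral)
    then have "pos_lin_dep J (\<lambda>i. v i xbar)"
      unfolding pos_lin_dep_def using L FJ True by auto
    then obtain U where "open U" "xbar \<in> U" and U: "\<forall>y\<in>U. lin_dep_fam J (\<lambda>i. v i y)"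
      using cpld J_active by blast
    then obtain k where "xs (\<sigma> k) \<in> U"
      using eventually_happens'[OF sequentially_bot topological_tendstoD[OF xs\<sigma>]] by blast
    with U indep have False
      by blast
    then show ?thesis ..
  next
    case False
    with \<open>L0 \<ge> 0\<close> have "L0 > 0"
      by simp
    show ?thesis
      by (rule fritz_john_normal_imp_KKT[OF \<open>L0 > 0\<close> J_active L FJ feasible])
  qed
qed

lemma C1_imp_isCont: "C1 f \<Longrightarrow> isCont f x"
  unfolding C1_def by (simp add: differentiable_imp_continuous_within)

lemma C1_imp_isCont_pgrad:
  assumes "C1 f"
  shows "isCont (pgrad blk \<nu> f) x"
proof -
  have "isCont (grad f) x"
    using assms by (simp add: C1_def continuous_on_eq_continuous_at)
  then have "isCont (\<lambda>y. partial j f y) x" for j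
    using isCont_vec_nth by (fastforce simp: grad_def)
  then show ?thesis
    unfolding pgrad_def isCont_def by (intro tendsto_vec_lambda) (auto simp: isCont_def)
qed

theorem theorem2p6:
  fixes blk :: "'n::finite \<Rightarrow> 'p::finite"
    and \<theta> :: "'p \<Rightarrow> real^'n \<Rightarrow> real"
    and r :: "'p \<Rightarrow> nat"
    and c :: "'p \<Rightarrow> nat \<Rightarrow> real^'n \<Rightarrow> real"
    and xs :: "nat \<Rightarrow> real^'n" and xbar :: "real^'n"
    and lam :: "nat \<Rightarrow> 'p \<Rightarrow> nat \<Rightarrow> real"
  assumes C1_theta: "\<And>\<nu>. C1 (\<theta> \<nu>)"
    and C1_c: "\<And>\<nu> i. i < r \<nu> \<Longrightarrow> C1 (c \<nu> i)"
    and conv: "xs \<longlonglongrightarrow> xbar"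
    and stat: "\<And>\<nu>. (\<lambda>k. pgrad blk \<nu> (\<theta> \<nu>) (xs k)
                   + (\<Sum>i<r \<nu>. lam k \<nu> i *\<^sub>R pgrad blk \<nu> (c \<nu> i) (xs k))) \<longlonglongrightarrow> 0"
    and compl: "\<And>\<nu> i. i < r \<nu> \<Longrightarrow> (\<lambda>k. min (- c \<nu> i (xs k)) (lam k \<nu> i)) \<longlonglongrightarrow> 0"
    and cpld: "GNEP_CPLD blk r c xbar"
  shows "\<exists>lbar. is_KKT blk \<theta> r c xbar lbar"
proof -
  have "\<exists>l. pgrad blk \<nu> (\<theta> \<nu>) xbar + (\<Sum>i<r \<nu>. l i *\<^sub>R pgrad blk \<nu> (c \<nu> i) xbar) = 0
      \<and> (\<forall>i<r \<nu>. min (- c \<nu> i xbar) (l i) = 0)" for \<nu>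
  proof (rule AKKT_CPLD_imp_KKT[OF conv _ _ _ _ stat[of \<nu>] compl[of _ \<nu>]])
    show "I \<subseteq> {i. i < r \<nu> \<and> c \<nu> i xbar = 0} \<Longrightarrow> pos_lin_dep I (\<lambda>i. pgrad blk \<nu> (c \<nu> i) xbar) \<Longrightarrow>
        \<exists>U. open U \<and> xbar \<in> U \<and> (\<forall>y\<in>U. lin_dep_fam I (\<lambda>i. pgrad blk \<nu> (c \<nu> i) y))" for I
      using cpld unfolding GNEP_CPLD_def CPLD_player_def by blast
  qed (use cpld in \<open>auto simp: GNEP_CPLD_def C1_theta C1_c C1_imp_isCont C1_imp_isCont_pgrad\<close>)
  then show ?thesis
    unfolding is_KKT_def by metis
qed

end
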